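(* Let $\mathsf{K}$ be a congruence permutable variety and $\mathbf{B}\in\mathsf{K}$. If some subalgebra $\mathbf{A}\leq\mathbf{B}$ is fully epic in $\mathsf{K}$, then $\mathbf{B}$ is finitely subdirectly irreducible.
   Context: A variety is congruence permutable if $\theta_1\circ\theta_2=\theta_2\circ\theta_1$ for all congruences of every member. An algebra is finitely subdirectly irreducible (FSI) if it is nontrivial and its identity congruence is not the intersection of two congruences both different from the identity. $\mathbf{A}\leq\mathbf{B}$ is epic in $\mathsf{K}$ if for all $\mathbf{C}\in\mathsf{K}$ and homomorphisms $g,h\colon\mathbf{B}\to\mathbf{C}$, $g{\upharpoonright}_A=h{\upharpoonright}_A$ implies $g=h$; it is full in $\mathsf{K}$ if it is proper, almost total ($B=\mathrm{Sg}^{\mathbf{B}}(A\cup\{b\})$ for some $b$), and every congruence $\theta\neq\mathrm{id}_B$ of $\mathbf{B}$ relates each $b\in B$ to some $a\in A$; fully epic means full and epic. *)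

theory Defs
  imports Main
begin

type_synonym ('f, 'a) alg = "'a set \<times> ('f \<Rightarrow> 'a list \<Rightarrow> 'a)"

datatype ('f, 'v) trm = Var 'v | App 'f "('f, 'v) trm list"

fun eval :: "('f \<Rightarrow> 'a list \<Rightarrow> 'a) \<Rightarrow> ('v \<Rightarrow> 'a) \<Rightarrow> ('f, 'v) trm \<Rightarrow> 'a" where
  "eval F \<sigma> (Var v) = \<sigma> v"
| "eval F \<sigma> (App f ts) = F f (map (eval F \<sigma>) ts)"

fun wf_trm :: "('f \<Rightarrow> nat) \<Rightarrow> ('f, 'v) trm \<Rightarrow> bool" where
  "wf_trm ar (Var v) = True"
| "wf_trm ar (App f ts) = (length ts = ar f \<and> (\<forall>t\<in>set ts. wf_trm ar t))"

definition closed_under :: "('f \<Rightarrow> nat) \<Rightarrow> ('f \<Rightarrow> 'a list \<Rightarrow> 'a) \<Rightarrow> 'a set \<Rightarrow> bool" where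
  "closed_under ar F S \<longleftrightarrow>
     (\<forall>f xs. length xs = ar f \<and> set xs \<subseteq> S \<longrightarrow> F f xs \<in> S)"

definition algebra :: "('f \<Rightarrow> nat) \<Rightarrow> ('f, 'a) alg \<Rightarrow> bool" where
  "algebra ar A \<longleftrightarrow> fst A \<noteq> {} \<and> closed_under ar (snd A) (fst A)"

definition subalgebra :: "('f \<Rightarrow> nat) \<Rightarrow> 'a set \<Rightarrow> ('f, 'a) alg \<Rightarrow> bool" where
  "subalgebra ar S B \<longleftrightarrow> S \<noteq> {} \<and> S \<subseteq> fst B \<and> closed_under ar (snd B) S"

definition Sg :: "('f \<Rightarrow> nat) \<Rightarrow> ('f, 'a) alg \<Rightarrow> 'a set \<Rightarrow> 'a set" where
  "Sg ar B X = \<Inter>{S. S \<subseteq> fst B \<and> X \<subseteq> S \<and> closed_under ar (snd B) S}"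

definition hom :: "('f \<Rightarrow> nat) \<Rightarrow> ('f, 'a) alg \<Rightarrow> ('f, 'b) alg \<Rightarrow> ('a \<Rightarrow> 'b) \<Rightarrow> bool" where
  "hom ar A C h \<longleftrightarrow> h ` fst A \<subseteq> fst C \<and>
     (\<forall>f xs. length xs = ar f \<and> set xs \<subseteq> fst A \<longrightarrow> h (snd A f xs) = snd C f (map h xs))"

definition congruence :: "('f \<Rightarrow> nat) \<Rightarrow> ('f, 'a) alg \<Rightarrow> 'a rel \<Rightarrow> bool" where
  "congruence ar A \<theta> \<longleftrightarrow> equiv (fst A) \<theta> \<and>
     (\<forall>f xs ys. length xs = ar f \<and> length ys = ar f \<and> set xs \<subseteq> fst A \<and> set ys \<subseteq> fst A
        \<and> list_all2 (\<lambda>x y. (x, y) \<in> \<theta>) xs ys \<longrightarrow> (snd A f xs, snd A f ys) \<in> \<theta>)"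

text \<open>Equational classes (varieties, by Birkhoff's HSP theorem): Sigma is a set of
identities between well-formed terms in the variables nat.\<close>
definition satisfies :: "('f, 'a) alg \<Rightarrow> ('f, nat) trm \<times> ('f, nat) trm \<Rightarrow> bool" where
  "satisfies A e \<longleftrightarrow>
     (\<forall>\<sigma>. range \<sigma> \<subseteq> fst A \<longrightarrow> eval (snd A) \<sigma> (fst e) = eval (snd A) \<sigma> (snd e))"

definition identities :: "('f \<Rightarrow> nat) \<Rightarrow> (('f, nat) trm \<times> ('f, nat) trm) set \<Rightarrow> bool" where
  "identities ar \<Sigma> \<longleftrightarrow> (\<forall>e\<in>\<Sigma>. wf_trm ar (fst e) \<and> wf_trm ar (snd e))"

definition in_var :: "('f \<Rightarrow> nat) \<Rightarrow> (('f, nat) trm \<times> ('f, nat) trm) set \<Rightarrow> ('f, 'a) alg \<Rightarrow> bool" where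
  "in_var ar \<Sigma> A \<longleftrightarrow> algebra ar A \<and> (\<forall>e\<in>\<Sigma>. satisfies A e)"

text \<open>Universe type used for the members of K quantified over inside definitions
(HOL cannot quantify over types inside a formula). It is infinite and large enough
to contain isomorphic copies of every algebra that matters.\<close>
type_synonym ('f, 'a) univ = "('f, 'a + 'a) trm"

definition cong_permutable :: "('f \<Rightarrow> nat) \<Rightarrow> ('f, 'a) alg \<Rightarrow> bool" where
  "cong_permutable ar A \<longleftrightarrow>
     (\<forall>\<theta>1 \<theta>2. congruence ar A \<theta>1 \<and> congruence ar A \<theta>2 \<longrightarrow> \<theta>1 O \<theta>2 = \<theta>2 O \<theta>1)"

definition cp_variety :: "('f \<Rightarrow> nat) \<Rightarrow> (('f, nat) trm \<times> ('f, nat) trm) set \<Rightarrow> 'a itself \<Rightarrow> bool" where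
  "cp_variety ar \<Sigma> (_ :: 'a itself) \<longleftrightarrow>
     (\<forall>C :: ('f, ('f, 'a) univ) alg. in_var ar \<Sigma> C \<longrightarrow> cong_permutable ar C)"

definition FSI :: "('f \<Rightarrow> nat) \<Rightarrow> ('f, 'a) alg \<Rightarrow> bool" where
  "FSI ar B \<longleftrightarrow> (\<exists>x\<in>fst B. \<exists>y\<in>fst B. x \<noteq> y) \<and>
     (\<forall>\<theta>1 \<theta>2. congruence ar B \<theta>1 \<and> congruence ar B \<theta>2 \<and> \<theta>1 \<inter> \<theta>2 = Id_on (fst B)
        \<longrightarrow> \<theta>1 = Id_on (fst B) \<or> \<theta>2 = Id_on (fst B))"

definition epic_in :: "('f \<Rightarrow> nat) \<Rightarrow> (('f, nat) trm \<times> ('f, nat) trm) set \<Rightarrow> 'a set \<Rightarrow> ('f, 'a) alg \<Rightarrow> bool" where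
  "epic_in ar \<Sigma> A B \<longleftrightarrow>
     (\<forall>(C :: ('f, ('f, 'a) univ) alg) g h. in_var ar \<Sigma> C \<and> hom ar B C g \<and> hom ar B C h
        \<and> (\<forall>a\<in>A. g a = h a) \<longrightarrow> (\<forall>b\<in>fst B. g b = h b))"

definition full_in :: "('f \<Rightarrow> nat) \<Rightarrow> 'a set \<Rightarrow> ('f, 'a) alg \<Rightarrow> bool" where
  "full_in ar A B \<longleftrightarrow> A \<subset> fst B \<and>
     (\<exists>b\<in>fst B. Sg ar B (A \<union> {b}) = fst B) \<and>
     (\<forall>\<theta>. congruence ar B \<theta> \<and> \<theta> \<noteq> Id_on (fst B) \<longrightarrow> (\<forall>b\<in>fst B. \<exists>a\<in>A. (b, a) \<in> \<theta>))"

definition fully_epic_in :: "('f \<Rightarrow> nat) \<Rightarrow> (('f, nat) trm \<times> ('f, nat) trm) set \<Rightarrow> 'a set \<Rightarrow> ('f, 'a) alg \<Rightarrow> bool" where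
  "fully_epic_in ar \<Sigma> A B \<longleftrightarrow> full_in ar A B \<and> epic_in ar \<Sigma> A B"

end

theory Submission imports Defs begin

text \<open>Let \<theta>1 \<inter> \<theta>2 be the identity with \<theta>1, \<theta>2 nontrivial. By fullness every element of B
is \<theta>1-related and \<theta>2-related to an element of A, and A, lying in the variety, has
permuting congruences; this makes L = \<theta>1 \<circ> (\<theta>2|A) \<circ> \<theta>1 a congruence of B. Choosing for
each b a \<theta>2-related r(b) \<in> A gives a map that is a homomorphism modulo L and the identity
modulo L on A. As A is epic and B/L lies in the variety, b L r(b) for every b, and permuting
\<theta>1|A with \<theta>2|A turns this into b \<theta>1 c \<theta>2 b for some c \<in> A, so b = c. Hence B = A,
contradicting properness.\<close>

lemma eval_closed:
  assumes "closed_under ar F S" "range \<sigma> \<subseteq> S" "wf_trm ar t"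
  shows "eval F \<sigma> t \<in> S"
  using assms(3)
proof (induction t)
  case (Var x) then show ?case using assms(2) by auto
next
  case (App f ts)
  have "set (map (eval F \<sigma>) ts) \<subseteq> S" using App by auto
  moreover have "length (map (eval F \<sigma>) ts) = ar f" using App by simp
  ultimately show ?case using assms(1) unfolding closed_under_def by simp
qed

lemma eval_hom:
  assumes "hom ar A C h" "closed_under ar (snd A) (fst A)" "range \<sigma> \<subseteq> fst A" "wf_trm ar t"
  shows "h (eval (snd A) \<sigma> t) = eval (snd C) (h \<circ> \<sigma>) t"
  using assms(4)
proof (induction t)
  case (Var x) then show ?case by simp
next
  case (App f ts)
  have "set (map (eval (snd A) \<sigma>) ts) \<subseteq> fst A" and "length (map (eval (snd A) \<sigma>) ts) = ar f"
    using App eval_closed[OF assms(2,3)] by auto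
  then have "h (eval (snd A) \<sigma> (App f ts)) = snd C f (map h (map (eval (snd A) \<sigma>) ts))"
    using assms(1) unfolding hom_def by simp
  also have "map h (map (eval (snd A) \<sigma>) ts) = map (eval (snd C) (h \<circ> \<sigma>)) ts"
    using App by (simp add: comp_def)
  finally show ?case by (simp add: comp_def)
qed

lemma hom_image_in_var:
  assumes ids: "identities ar \<Sigma>" and A: "in_var ar \<Sigma> A" and h: "hom ar A C h"
    and onto: "h ` fst A = fst C"
  shows "in_var ar \<Sigma> C"
proof -
  have clA: "closed_under ar (snd A) (fst A)" and neA: "fst A \<noteq> {}"
    using A unfolding in_var_def algebra_def by auto
  let ?inv = "inv_into (fst A) h"
  have inv: "?inv y \<in> fst A" "h (?inv y) = y" if "y \<in> fst C" for y
    using that onto by (auto intro: inv_into_into f_inv_into_f)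
  have clC: "closed_under ar (snd C) (fst C)"
    unfolding closed_under_def
  proof (intro allI impI)
    fix f ys assume ys: "length ys = ar f \<and> set ys \<subseteq> fst C"
    define xs where "xs = map ?inv ys"
    have xs: "set xs \<subseteq> fst A" "map h xs = ys"
      using ys inv unfolding xs_def by (auto intro!: map_idI)
    then have "snd C f ys = h (snd A f xs)"
      using h ys unfolding hom_def xs_def by auto
    moreover have "snd A f xs \<in> fst A"
      using clA xs ys unfolding closed_under_def xs_def by auto
    ultimately show "snd C f ys \<in> fst C" using onto by auto
  qed
  have "satisfies C e" if e: "e \<in> \<Sigma>" for e
    unfolding satisfies_def
  proof (intro allI impI)
    fix \<sigma> :: "nat \<Rightarrow> _" assume \<sigma>: "range \<sigma> \<subseteq> fst C"
    define \<sigma>' where "\<sigma>' = ?inv \<circ> \<sigma>"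
    have \<sigma>': "range \<sigma>' \<subseteq> fst A" "h \<circ> \<sigma>' = \<sigma>"
      using \<sigma> inv unfolding \<sigma>'_def by (auto simp: fun_eq_iff)
    have wf: "wf_trm ar (fst e)" "wf_trm ar (snd e)"
      using ids e unfolding identities_def by auto
    have "eval (snd A) \<sigma>' (fst e) = eval (snd A) \<sigma>' (snd e)"
      using A e \<sigma>' unfolding in_var_def satisfies_def by auto
    then show "eval (snd C) \<sigma> (fst e) = eval (snd C) \<sigma> (snd e)"
      using eval_hom[OF h clA \<sigma>'(1) wf(1)] eval_hom[OF h clA \<sigma>'(1) wf(2)] \<sigma>'(2) by simp
  qed
  then show ?thesis using clC neA onto unfolding in_var_def algebra_def by auto
qed

lemma subalgebra_in_var:
  assumes "in_var ar \<Sigma> B" and "subalgebra ar A B"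
  shows "in_var ar \<Sigma> (A, snd B)"
  using assms unfolding in_var_def algebra_def subalgebra_def satisfies_def by fastforce

lemma hom_inv_into:
  assumes h: "hom ar A C h" and clA: "closed_under ar (snd A) (fst A)"
    and inj: "inj_on h (fst A)" and onto: "h ` fst A = fst C"
  shows "hom ar C A (inv_into (fst A) h)"
  unfolding hom_def
proof (intro conjI allI impI)
  show "inv_into (fst A) h ` fst C \<subseteq> fst A" using onto by (auto intro: inv_into_into)
next
  fix f ys assume ys: "length ys = ar f \<and> set ys \<subseteq> fst C"
  define xs where "xs = map (inv_into (fst A) h) ys"
  have "inv_into (fst A) h y \<in> fst A" "h (inv_into (fst A) h y) = y" if "y \<in> fst C" for y
    using that onto by (auto intro: inv_into_into f_inv_into_f)
  then have xs: "set xs \<subseteq> fst A" "map h xs = ys"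
    using ys unfolding xs_def by (auto intro!: map_idI)
  then have "snd C f ys = h (snd A f xs)" using h ys unfolding hom_def xs_def by auto
  moreover have "snd A f xs \<in> fst A" using clA xs ys unfolding closed_under_def xs_def by auto
  ultimately show "inv_into (fst A) h (snd C f ys) = snd A f (map (inv_into (fst A) h) ys)"
    using inj unfolding xs_def by simp
qed

definition compatible :: "('f \<Rightarrow> nat) \<Rightarrow> ('f, 'a) alg \<Rightarrow> 'a rel \<Rightarrow> bool" where
  "compatible ar B R \<longleftrightarrow>
     (\<forall>f xs ys. length xs = ar f \<and> list_all2 (\<lambda>x y. (x, y) \<in> R) xs ys
        \<longrightarrow> (snd B f xs, snd B f ys) \<in> R)"

lemma list_all2_set_subset:
  assumes "list_all2 (\<lambda>x y. (x, y) \<in> R) xs ys" "R \<subseteq> S \<times> S"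
  shows "set xs \<subseteq> S" "set ys \<subseteq> S"
  using assms by (fastforce simp: list_all2_conv_all_nth in_set_conv_nth)+

lemma congruence_iff_compatible:
  "congruence ar B \<theta> \<longleftrightarrow> equiv (fst B) \<theta> \<and> compatible ar B \<theta>"
  unfolding congruence_def compatible_def
  by (metis equiv_type list_all2_set_subset list_all2_lengthD)

lemma congruence_map:
  assumes \<theta>: "congruence ar B \<theta>" and xs: "length xs = ar f" "set xs \<subseteq> fst B"
    and g: "\<And>x. x \<in> set xs \<Longrightarrow> (x, g x) \<in> \<theta>"
  shows "(snd B f xs, snd B f (map g xs)) \<in> \<theta>"
proof -
  have "list_all2 (\<lambda>x y. (x, y) \<in> \<theta>) xs (map g xs)"
    using g by (simp add: list.rel_map list_all2_same)
  moreover have "set (map g xs) \<subseteq> fst B"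
    using g \<theta> unfolding congruence_def equiv_def by auto
  ultimately show ?thesis using \<theta> xs unfolding congruence_def by simp
qed

lemma compatible_relcomp:
  assumes "compatible ar B R" "compatible ar B S"
  shows "compatible ar B (R O S)"
  unfolding compatible_def
proof (intro allI impI)
  fix f xs ys assume a: "length xs = ar f \<and> list_all2 (\<lambda>x y. (x, y) \<in> R O S) xs ys"
  then have "list_all2 ((\<lambda>x y. (x, y) \<in> R) OO (\<lambda>x y. (x, y) \<in> S)) xs ys"
    by (simp add: relcompp_relcomp_eq)
  then obtain zs where zs: "list_all2 (\<lambda>x y. (x, y) \<in> R) xs zs" "list_all2 (\<lambda>x y. (x, y) \<in> S) zs ys"
    by (auto simp: list.rel_compp)
  then have "length zs = ar f" using a by (simp add: list_all2_lengthD)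
  then show "(snd B f xs, snd B f ys) \<in> R O S"
    using assms a zs unfolding compatible_def by blast
qed

lemma compatible_restrict:
  assumes "compatible ar B R" and "closed_under ar (snd B) A"
  shows "compatible ar B (R \<inter> A \<times> A)"
  unfolding compatible_def
proof (intro allI impI)
  fix f xs ys assume a: "length xs = ar f \<and> list_all2 (\<lambda>x y. (x, y) \<in> R \<inter> A \<times> A) xs ys"
  then have "set xs \<subseteq> A" "set ys \<subseteq> A" "length ys = ar f"
    using list_all2_set_subset[of "R \<inter> A \<times> A" xs ys A] by (auto dest: list_all2_lengthD)
  moreover have "list_all2 (\<lambda>x y. (x, y) \<in> R) xs ys"
    using a by (auto elim: list_all2_mono)
  ultimately show "(snd B f xs, snd B f ys) \<in> R \<inter> A \<times> A"
    using assms a unfolding compatible_def closed_under_def by auto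
qed

lemma congruence_restrict:
  assumes "congruence ar B \<theta>" and "subalgebra ar A B"
  shows "congruence ar (A, snd B) (\<theta> \<inter> A \<times> A)"
proof -
  have "equiv (fst B) \<theta>" "compatible ar B \<theta>" "A \<subseteq> fst B" "closed_under ar (snd B) A"
    using assms unfolding congruence_iff_compatible subalgebra_def by auto
  then have "equiv A (\<theta> \<inter> A \<times> A)" "compatible ar B (\<theta> \<inter> A \<times> A)"
    using compatible_restrict unfolding equiv_def refl_on_def sym_def trans_def by blast+
  then show ?thesis by (simp only: congruence_iff_compatible compatible_def fst_conv snd_conv)
qed

lemma congruence_vimage:
  assumes A: "algebra ar A" and h: "hom ar A C h" and \<theta>: "congruence ar C \<theta>"
  shows "congruence ar A {(x, y). x \<in> fst A \<and> y \<in> fst A \<and> (h x, h y) \<in> \<theta>}"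
    (is "congruence ar A ?P")
proof -
  have e: "equiv (fst C) \<theta>" using \<theta> unfolding congruence_def by simp
  have hA: "h x \<in> fst C" if "x \<in> fst A" for x using h that unfolding hom_def by auto
  have "equiv (fst A) ?P"
  proof (rule equivI)
    show "?P \<subseteq> fst A \<times> fst A" by auto
    show "refl_on (fst A) ?P"
      using e hA unfolding equiv_def refl_on_def by auto
    show "sym ?P" using e unfolding equiv_def sym_def by auto
    show "trans ?P" using e unfolding equiv_def trans_def by blast
  qed
  moreover have "(snd A f xs, snd A f ys) \<in> ?P"
    if a: "length xs = ar f" "length ys = ar f" "set xs \<subseteq> fst A" "set ys \<subseteq> fst A"
      "list_all2 (\<lambda>x y. (x, y) \<in> ?P) xs ys" for f xs ys
  proof -
    have "list_all2 (\<lambda>x y. (x, y) \<in> \<theta>) (map h xs) (map h ys)"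
      using a(5) by (auto simp: list.rel_map elim: list_all2_mono)
    moreover have "set (map h xs) \<subseteq> fst C" "set (map h ys) \<subseteq> fst C"
      using a hA by auto
    ultimately have "(snd C f (map h xs), snd C f (map h ys)) \<in> \<theta>"
      using \<theta> a unfolding congruence_def by simp
    moreover have "snd A f xs \<in> fst A" "snd A f ys \<in> fst A"
      using A a unfolding algebra_def closed_under_def by auto
    moreover have "h (snd A f xs) = snd C f (map h xs)" "h (snd A f ys) = snd C f (map h ys)"
      using h a unfolding hom_def by auto
    ultimately show ?thesis by simp
  qed
  ultimately show ?thesis unfolding congruence_def by (intro conjI allI impI) auto
qed

lemma cong_permutable_hom_image:
  assumes A': "algebra ar A'" and h: "hom ar A' A h" and onto: "h ` fst A' = fst A"
    and cp: "cong_permutable ar A'"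
  shows "cong_permutable ar A"
proof -
  let ?pull = "\<lambda>\<theta>. {(x, y). x \<in> fst A' \<and> y \<in> fst A' \<and> (h x, h y) \<in> \<theta>}"
  have "\<theta>1 O \<theta>2 \<subseteq> \<theta>2 O \<theta>1" if c1: "congruence ar A \<theta>1" and c2: "congruence ar A \<theta>2" for \<theta>1 \<theta>2
  proof
    fix p assume "p \<in> \<theta>1 O \<theta>2"
    then obtain x y z where p: "p = (x, z)" "(x, y) \<in> \<theta>1" "(y, z) \<in> \<theta>2" by auto
    then have "x \<in> h ` fst A'" "y \<in> h ` fst A'" "z \<in> h ` fst A'"
      using c1 c2 onto unfolding congruence_def equiv_def by auto
    then obtain x' y' z' where "x' \<in> fst A'" "y' \<in> fst A'" "z' \<in> fst A'"
      and xyz: "x = h x'" "y = h y'" "z = h z'"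
      by (elim imageE)
    with p have "(x', z') \<in> ?pull \<theta>1 O ?pull \<theta>2" by blast
    moreover have "?pull \<theta>1 O ?pull \<theta>2 = ?pull \<theta>2 O ?pull \<theta>1"
      using cp congruence_vimage[OF A' h c1] congruence_vimage[OF A' h c2]
      unfolding cong_permutable_def by simp
    ultimately obtain w' where "(x', w') \<in> ?pull \<theta>2" "(w', z') \<in> ?pull \<theta>1" by auto
    then show "p \<in> \<theta>2 O \<theta>1" using p xyz by auto
  qed
  then show ?thesis unfolding cong_permutable_def by blast
qed

definition image_alg :: "('f, 'a) alg \<Rightarrow> ('a \<Rightarrow> 'b) \<Rightarrow> ('f, 'b) alg" where
  "image_alg B q = (q ` fst B, \<lambda>f ts. q (snd B f (map (inv_into (fst B) q) ts)))"

lemma hom_image_alg: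
  assumes L: "congruence ar B L" and ker: "\<forall>x\<in>fst B. \<forall>y\<in>fst B. q x = q y \<longleftrightarrow> (x, y) \<in> L"
  shows "hom ar B (image_alg B q) q"
  unfolding hom_def
proof (intro conjI allI impI)
  show "q ` fst B \<subseteq> fst (image_alg B q)" by (simp add: image_alg_def)
next
  fix f xs assume xs: "length xs = ar f \<and> set xs \<subseteq> fst B"
  have LB: "L \<subseteq> fst B \<times> fst B" using L unfolding congruence_def equiv_def by simp
  have inv_L: "(x, inv_into (fst B) q (q x)) \<in> L" if "x \<in> set xs" for x
  proof -
    have "x \<in> fst B" using that xs by auto
    moreover have "inv_into (fst B) q (q x) \<in> fst B" "q x = q (inv_into (fst B) q (q x))"
      using \<open>x \<in> fst B\<close> f_inv_into_f[of "q x" q "fst B"] by (auto intro: inv_into_into)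
    ultimately show ?thesis using ker by simp
  qed
  have "(snd B f xs, snd B f (map (\<lambda>x. inv_into (fst B) q (q x)) xs)) \<in> L"
    by (rule congruence_map[OF L]) (use xs inv_L in auto)
  then have "q (snd B f xs) = q (snd B f (map (\<lambda>x. inv_into (fst B) q (q x)) xs))"
    using ker LB by blast
  then show "q (snd B f xs) = snd (image_alg B q) f (map q xs)"
    unfolding image_alg_def by (simp add: comp_def)
qed

lemma congruence_Id_on:
  assumes "algebra ar B"
  shows "congruence ar B (Id_on (fst B))"
proof -
  have "list_all2 (\<lambda>x y. (x, y) \<in> Id_on (fst B)) xs ys \<Longrightarrow> xs = ys" for xs ys
    by (induction xs ys rule: list_all2_induct) auto
  moreover have "equiv (fst B) (Id_on (fst B))"
    unfolding equiv_def refl_on_def sym_def trans_def by auto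
  ultimately show ?thesis
    using assms unfolding congruence_def algebra_def closed_under_def by (metis Id_onI)
qed

lemma equiv_representative:
  assumes "equiv S L"
  obtains rep :: "'a \<Rightarrow> 'a" where "\<forall>x\<in>S. \<forall>y\<in>S. rep x = rep y \<longleftrightarrow> (x, y) \<in> L"
proof -
  define rep where "rep x = (SOME z. (x, z) \<in> L)" for x
  have sym: "sym L" and trans: "trans L" using assms unfolding equiv_def by auto
  have "\<forall>x\<in>S. \<forall>y\<in>S. rep x = rep y \<longleftrightarrow> (x, y) \<in> L"
  proof (intro ballI iffI)
    fix x y assume "x \<in> S" "y \<in> S" and rep_eq: "rep x = rep y"
    have "(z, rep z) \<in> L" if "z \<in> S" for z
      using assms that unfolding equiv_def refl_on_def rep_def by (auto intro: someI)
    then have x: "(x, rep x) \<in> L" and y: "(y, rep y) \<in> L" using \<open>x \<in> S\<close> \<open>y \<in> S\<close> by auto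
    from y have "(rep x, y) \<in> L" unfolding rep_eq by (rule symD[OF sym])
    with x show "(x, y) \<in> L" by (rule transD[OF trans])
  next
    fix x y assume xy: "(x, y) \<in> L"
    then have yx: "(y, x) \<in> L" by (rule symD[OF sym])
    have "(x, z) \<in> L \<longleftrightarrow> (y, z) \<in> L" for z
      using transD[OF trans xy] transD[OF trans yx] by blast
    then show "rep x = rep y" unfolding rep_def by simp
  qed
  then show ?thesis by (rule that)
qed

text \<open>The type \<open>('f, 'a) univ\<close> contains a copy of \<open>'a\<close> via \<open>Var \<circ> Inl\<close>, which is how
members of the variety over \<open>'a\<close> and their quotients reach the algebras quantified
over in \<open>cp_variety\<close> and \<open>epic_in\<close>.\<close>

lemma cp_variety_cong_permutable:
  fixes X :: "('f, 'a) alg"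
  assumes ids: "identities ar \<Sigma>" and cpv: "cp_variety ar \<Sigma> TYPE('a)" and X: "in_var ar \<Sigma> X"
  shows "cong_permutable ar X"
proof -
  define e :: "'a \<Rightarrow> ('f, 'a) univ" where "e = (\<lambda>x. Var (Inl x))"
  have inj: "inj_on e (fst X)" by (simp add: e_def inj_on_def)
  have algX: "algebra ar X" using X unfolding in_var_def by simp
  have e: "hom ar X (image_alg X e) e"
    by (rule hom_image_alg[OF congruence_Id_on[OF algX]]) (use inj in \<open>auto dest: inj_onD\<close>)
  have onto: "e ` fst X = fst (image_alg X e)" by (simp add: image_alg_def)
  have X': "in_var ar \<Sigma> (image_alg X e)" by (rule hom_image_in_var[OF ids X e onto])
  show ?thesis
  proof (rule cong_permutable_hom_image)
    show "algebra ar (image_alg X e)" using X' unfolding in_var_def by simp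
    show "cong_permutable ar (image_alg X e)" using cpv X' unfolding cp_variety_def by blast
    show "hom ar (image_alg X e) X (inv_into (fst X) e)"
      using hom_inv_into[OF e _ inj onto] algX unfolding algebra_def by simp
    show "inv_into (fst X) e ` fst (image_alg X e) = fst X"
      using inj by (simp add: image_alg_def)
  qed
qed

lemma epic_in_congruence:
  fixes B :: "('f, 'a) alg"
  assumes ids: "identities ar \<Sigma>" and B: "in_var ar \<Sigma> B" and epic: "epic_in ar \<Sigma> A B"
    and L: "congruence ar B L"
    and r_into: "r ` fst B \<subseteq> fst B"
    and r_hom: "\<And>f xs. length xs = ar f \<Longrightarrow> set xs \<subseteq> fst B
                  \<Longrightarrow> (r (snd B f xs), snd B f (map r xs)) \<in> L"
    and r_A: "\<And>a. a \<in> A \<Longrightarrow> (a, r a) \<in> L"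
    and b: "b \<in> fst B"
  shows "(b, r b) \<in> L"
proof -
  have eqv: "equiv (fst B) L" using L unfolding congruence_def by simp
  then have LB: "L \<subseteq> fst B \<times> fst B" unfolding equiv_def by simp
  obtain rep :: "'a \<Rightarrow> 'a" where rep: "\<forall>x\<in>fst B. \<forall>y\<in>fst B. rep x = rep y \<longleftrightarrow> (x, y) \<in> L"
    using eqv by (rule equiv_representative)
  define q :: "'a \<Rightarrow> ('f, 'a) univ" where "q x = Var (Inl (rep x))" for x
  have ker: "\<forall>x\<in>fst B. \<forall>y\<in>fst B. q x = q y \<longleftrightarrow> (x, y) \<in> L"
    using rep by (simp add: q_def)
  have ker_L: "q x = q y" if "(x, y) \<in> L" for x y
    using ker that LB by auto
  define C where "C = image_alg B q"
  have q: "hom ar B C q" unfolding C_def by (rule hom_image_alg[OF L ker])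
  have C: "in_var ar \<Sigma> C" by (rule hom_image_in_var[OF ids B q]) (simp add: C_def image_alg_def)
  have "hom ar B C (q \<circ> r)"
    unfolding hom_def
  proof (intro conjI allI impI)
    show "(q \<circ> r) ` fst B \<subseteq> fst C" using r_into by (auto simp: C_def image_alg_def)
  next
    fix f xs assume xs: "length xs = ar f \<and> set xs \<subseteq> fst B"
    then have "q (r (snd B f xs)) = q (snd B f (map r xs))"
      using r_hom ker_L by simp
    also have "\<dots> = snd C f (map q (map r xs))"
    proof -
      have "length (map r xs) = ar f" "set (map r xs) \<subseteq> fst B" using xs r_into by auto
      then show ?thesis using q unfolding hom_def by blast
    qed
    finally show "(q \<circ> r) (snd B f xs) = snd C f (map (q \<circ> r) xs)" by simp
  qed
  moreover have "\<forall>a\<in>A. q a = (q \<circ> r) a" using r_A ker_L by simp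
  ultimately have "q b = q (r b)" using epic C q b unfolding epic_in_def by fastforce
  moreover have "r b \<in> fst B" using r_into b by auto
  ultimately show ?thesis using ker b by simp
qed

lemma congruence_relcomp_restrict:
  assumes c1: "congruence ar B \<theta>1" and c2: "congruence ar B \<theta>2" and sub: "subalgebra ar A B"
    and full1: "\<forall>b\<in>fst B. \<exists>a\<in>A. (b, a) \<in> \<theta>1"
    and perm: "(\<theta>1 \<inter> A \<times> A) O (\<theta>2 \<inter> A \<times> A) = (\<theta>2 \<inter> A \<times> A) O (\<theta>1 \<inter> A \<times> A)"
  shows "congruence ar B (\<theta>1 O (\<theta>2 \<inter> A \<times> A) O \<theta>1)" (is "congruence ar B ?L")
proof -
  have AB: "A \<subseteq> fst B" and clA: "closed_under ar (snd B) A"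
    using sub unfolding subalgebra_def by auto
  have e1: "equiv (fst B) \<theta>1" and e2: "equiv (fst B) \<theta>2"
    and comp1: "compatible ar B \<theta>1" and comp2: "compatible ar B \<theta>2"
    using c1 c2 unfolding congruence_iff_compatible by auto
  then have sym1: "sym \<theta>1" and trans1: "trans \<theta>1" and trans2: "trans \<theta>2" and sym2: "sym \<theta>2"
    unfolding equiv_def by auto
  have "trans ?L"
  proof (rule transI)
    fix x y z assume "(x, y) \<in> ?L" "(y, z) \<in> ?L"
    then obtain a1 a2 a3 a4 where a: "a1 \<in> A" "a2 \<in> A" "a3 \<in> A" "a4 \<in> A"
      "(x, a1) \<in> \<theta>1" "(a1, a2) \<in> \<theta>2" "(a2, y) \<in> \<theta>1"
      "(y, a3) \<in> \<theta>1" "(a3, a4) \<in> \<theta>2" "(a4, z) \<in> \<theta>1" by blast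
    have "(a2, a3) \<in> \<theta>1" using transD[OF trans1 a(7,8)] .
    then have "(a1, a3) \<in> (\<theta>1 \<inter> A \<times> A) O (\<theta>2 \<inter> A \<times> A)" using a perm by blast
    then obtain c where c: "c \<in> A" "(a1, c) \<in> \<theta>1" "(c, a3) \<in> \<theta>2" by blast
    have "(x, c) \<in> \<theta>1" using transD[OF trans1 a(5) c(2)] .
    moreover have "(c, a4) \<in> \<theta>2" using transD[OF trans2 c(3) a(9)] .
    ultimately show "(x, z) \<in> ?L" using a c by blast
  qed
  moreover have "sym ?L"
  proof (rule symI)
    fix x y assume "(x, y) \<in> ?L"
    then obtain a a' where "a \<in> A" "a' \<in> A" "(x, a) \<in> \<theta>1" "(a, a') \<in> \<theta>2" "(a', y) \<in> \<theta>1"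
      by blast
    then show "(y, x) \<in> ?L" using symD[OF sym1] symD[OF sym2] by blast
  qed
  moreover have "refl_on (fst B) ?L"
    unfolding refl_on_def
  proof
    fix b assume "b \<in> fst B"
    then obtain a where "a \<in> A" "(b, a) \<in> \<theta>1" using full1 by blast
    moreover from this have "(a, b) \<in> \<theta>1" "(a, a) \<in> \<theta>2"
      using symD[OF sym1] e2 AB unfolding equiv_def refl_on_def by auto
    ultimately show "(b, b) \<in> ?L" by blast
  qed
  moreover have "?L \<subseteq> fst B \<times> fst B" using e1 unfolding equiv_def by blast
  moreover have "compatible ar B ?L"
    using compatible_relcomp[OF comp1 compatible_relcomp[OF compatible_restrict[OF comp2 clA] comp1]] .
  ultimately show ?thesis unfolding congruence_iff_compatible equiv_def by simp
qed

lemma carrier_subset_epic_subalgebra: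
  assumes ids: "identities ar \<Sigma>" and B: "in_var ar \<Sigma> B"
    and sub: "subalgebra ar A B" and epic: "epic_in ar \<Sigma> A B"
    and c1: "congruence ar B \<theta>1" and c2: "congruence ar B \<theta>2"
    and meet: "\<theta>1 \<inter> \<theta>2 = Id_on (fst B)"
    and full1: "\<forall>b\<in>fst B. \<exists>a\<in>A. (b, a) \<in> \<theta>1" and full2: "\<forall>b\<in>fst B. \<exists>a\<in>A. (b, a) \<in> \<theta>2"
    and perm: "(\<theta>1 \<inter> A \<times> A) O (\<theta>2 \<inter> A \<times> A) = (\<theta>2 \<inter> A \<times> A) O (\<theta>1 \<inter> A \<times> A)"
  shows "fst B \<subseteq> A"
proof
  fix b assume b: "b \<in> fst B"
  have AB: "A \<subseteq> fst B" and clA: "closed_under ar (snd B) A"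
    using sub unfolding subalgebra_def by auto
  have e1: "equiv (fst B) \<theta>1" and e2: "equiv (fst B) \<theta>2"
    using c1 c2 unfolding congruence_def by auto
  define L where "L = \<theta>1 O (\<theta>2 \<inter> A \<times> A) O \<theta>1"
  have L: "congruence ar B L"
    unfolding L_def by (rule congruence_relcomp_restrict[OF c1 c2 sub full1 perm])
  define r where "r = (\<lambda>x. SOME a. a \<in> A \<and> (x, a) \<in> \<theta>2)"
  have r: "r x \<in> A" "(x, r x) \<in> \<theta>2" if "x \<in> fst B" for x
    using someI_ex[of "\<lambda>a. a \<in> A \<and> (x, a) \<in> \<theta>2"] full2 that unfolding r_def by auto
  have \<theta>1_refl: "(a, a) \<in> \<theta>1" if "a \<in> A" for a
    using e1 AB that unfolding equiv_def refl_on_def by blast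
  have "(b, r b) \<in> L"
  proof (rule epic_in_congruence[OF ids B epic L _ _ _ b])
    show "r ` fst B \<subseteq> fst B" using r AB by blast
  next
    fix f xs assume xs: "length xs = ar f" "set xs \<subseteq> fst B"
    have "set (map r xs) \<subseteq> A" using xs r by auto
    then have "snd B f (map r xs) \<in> A" using clA xs unfolding closed_under_def by simp
    moreover have "snd B f xs \<in> fst B"
      using B xs unfolding in_var_def algebra_def closed_under_def by simp
    moreover have "(snd B f xs, snd B f (map r xs)) \<in> \<theta>2"
      using congruence_map[OF c2 xs] r xs by auto
    ultimately have "(r (snd B f xs), snd B f (map r xs)) \<in> \<theta>2 \<inter> A \<times> A"
      using r e2 unfolding equiv_def sym_def trans_def by blast
    then show "(r (snd B f xs), snd B f (map r xs)) \<in> L"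
      unfolding L_def using \<theta>1_refl by blast
  next
    fix a assume "a \<in> A"
    then show "(a, r a) \<in> L" unfolding L_def using r AB \<theta>1_refl by blast
  qed
  then obtain a1 a2 where a: "a1 \<in> A" "a2 \<in> A" "(b, a1) \<in> \<theta>1" "(a1, a2) \<in> \<theta>2" "(a2, r b) \<in> \<theta>1"
    unfolding L_def by blast
  then have "(a1, r b) \<in> (\<theta>1 \<inter> A \<times> A) O (\<theta>2 \<inter> A \<times> A)" using perm r b by blast
  then obtain c where c: "c \<in> A" "(a1, c) \<in> \<theta>1" "(c, r b) \<in> \<theta>2" by blast
  have "(b, c) \<in> \<theta>1" using a c e1 unfolding equiv_def trans_def by blast
  moreover have "(b, c) \<in> \<theta>2" using r b c e2 unfolding equiv_def sym_def trans_def by blast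
  ultimately have "(b, c) \<in> Id_on (fst B)" using meet by blast
  then show "b \<in> A" using c by auto
qed

theorem mainTheorem12:
  fixes ar :: "'f \<Rightarrow> nat"
    and \<Sigma> :: "(('f, nat) trm \<times> ('f, nat) trm) set"
    and B :: "('f, 'a) alg"
  assumes "identities ar \<Sigma>"
    and "cp_variety ar \<Sigma> TYPE('a)"
    and "in_var ar \<Sigma> B"
    and "\<exists>A. subalgebra ar A B \<and> fully_epic_in ar \<Sigma> A B"
  shows "FSI ar B"
proof -
  obtain A where sub: "subalgebra ar A B" and full: "full_in ar A B" and epic: "epic_in ar \<Sigma> A B"
    using assms(4) unfolding fully_epic_in_def by blast
  have proper: "A \<subset> fst B" and "A \<noteq> {}" using full sub unfolding full_in_def subalgebra_def by auto
  then obtain a b where "a \<in> fst B" "b \<in> fst B" "a \<in> A" "b \<notin> A" by blast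
  then have nontrivial: "\<exists>x\<in>fst B. \<exists>y\<in>fst B. x \<noteq> y"
    by (intro bexI[of _ a] bexI[of _ b]) auto
  have cpA: "cong_permutable ar (A, snd B)"
    using cp_variety_cong_permutable[OF assms(1,2) subalgebra_in_var[OF assms(3) sub]] .
  have "\<theta>1 = Id_on (fst B) \<or> \<theta>2 = Id_on (fst B)"
    if c1: "congruence ar B \<theta>1" and c2: "congruence ar B \<theta>2" and meet: "\<theta>1 \<inter> \<theta>2 = Id_on (fst B)"
    for \<theta>1 \<theta>2
  proof (rule ccontr)
    assume "\<not> ?thesis"
    then have "\<forall>b\<in>fst B. \<exists>a\<in>A. (b, a) \<in> \<theta>1" "\<forall>b\<in>fst B. \<exists>a\<in>A. (b, a) \<in> \<theta>2"
      using full c1 c2 unfolding full_in_def by auto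
    moreover have "(\<theta>1 \<inter> A \<times> A) O (\<theta>2 \<inter> A \<times> A) = (\<theta>2 \<inter> A \<times> A) O (\<theta>1 \<inter> A \<times> A)"
      using cpA congruence_restrict[OF c1 sub] congruence_restrict[OF c2 sub]
      unfolding cong_permutable_def by blast
    ultimately have "fst B \<subseteq> A"
      using carrier_subset_epic_subalgebra[OF assms(1,3) sub epic c1 c2 meet] by blast
    then show False using proper by blast
  qed
  then show ?thesis using nontrivial unfolding FSI_def by blast
qed

end
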